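(* Let $\mathbb{F}$ be a field and let $(\mathbb{F}(\alpha,\beta),\sigma)$ be a bivariate difference field extension of $\mathbb{F}$ with $\sigma|_{\mathbb{F}}=\mathrm{id}$, $\sigma(\alpha)=\beta$, $\sigma(\beta)=u\alpha+v\beta$ ($u\in\mathbb{F}\setminus\{0\}$, $v\in\mathbb{F}$). Let $A=\begin{pmatrix}0&u\\1&v\end{pmatrix}$ and assume that $A$ has two distinct eigenvalues $\lambda_1\neq\lambda_2$ in $\mathbb{F}$ such that $\lambda_1/\lambda_2$ is not a root of unity. Let $p,q\in\mathbb{F}[\alpha,\beta]$ be nonzero homogeneous polynomials such that $g=\frac{p}{q}$ is semi-invariant. Then there exists an integer $i$ with $-\deg q\le i\le \deg p$ such that $$\frac{\sigma g}{g}=\lambda_1^{\,i}\,\lambda_2^{\,\deg p-\deg q-i}.$$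
   Context: A bivariate difference field extension $(\mathbb{F}(\alpha,\beta),\sigma)$ of a difference field $(\mathbb{F},\sigma)$ is the rational function field $\mathbb{F}(\alpha,\beta)$ in two algebraically independent transcendental elements $\alpha,\beta$ over $\mathbb{F}$, together with an automorphism $\sigma$ of $\mathbb{F}(\alpha,\beta)$ extending $\sigma$ on $\mathbb{F}$ and satisfying $\sigma(\alpha)=\beta$, $\sigma(\beta)=u\alpha+v\beta$ with $v\in\mathbb{F}$, $u\in\mathbb{F}\setminus\{0\}$. $\deg$ denotes total degree in $\alpha,\beta$; a polynomial is homogeneous if all its monomials have the same total degree. An element $a\in\mathbb{F}(\alpha,\beta)$ is called semi-invariant if $\sigma a=ca$ for some $c\in\mathbb{F}\setminus\{0\}$. *)

theory Defs
  imports "HOL-Computational_Algebra.Polynomial" "HOL-Computational_Algebra.Fraction_Field"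
begin

text \<open>Bivariate polynomials F[alpha,beta] are represented as 'a poly poly:
  the outer variable is beta, the inner variable is alpha, so the coefficient
  of alpha^i beta^j in p is coeff (coeff p j) i.\<close>

definition bconst :: "'a::comm_ring_1 \<Rightarrow> 'a poly poly" where
  "bconst a = [:[:a:]:]"

definition alpha :: "'a::comm_ring_1 poly poly" where
  "alpha = [:[:0, 1:]:]"

definition beta :: "'a::comm_ring_1 poly poly" where
  "beta = [:0, 1:]"

text \<open>The automorphism sigma restricted to F[alpha,beta]: identity on F,
  alpha maps to beta, beta maps to u alpha + v beta.\<close>
definition bsigma :: "'a::comm_ring_1 \<Rightarrow> 'a \<Rightarrow> 'a poly poly \<Rightarrow> 'a poly poly" where
  "bsigma u v p =
     poly (map_poly (\<lambda>c. poly (map_poly bconst c) beta) p)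
          (bconst u * alpha + bconst v * beta)"

definition fsigma :: "'a::field \<Rightarrow> 'a \<Rightarrow> 'a poly poly \<Rightarrow> 'a poly poly \<Rightarrow> 'a poly poly fract" where
  "fsigma u v p q = Fract (bsigma u v p) (bsigma u v q)"

definition total_degree :: "'a::zero poly poly \<Rightarrow> nat" where
  "total_degree p = Max ({i + j | i j. coeff (coeff p j) i \<noteq> 0} \<union> {0})"

definition homogeneous :: "'a::zero poly poly \<Rightarrow> bool" where
  "homogeneous p \<longleftrightarrow> (\<forall>i j. coeff (coeff p j) i \<noteq> 0 \<longrightarrow> i + j = total_degree p)"

definition eigenvalue_A :: "'a::field \<Rightarrow> 'a \<Rightarrow> 'a \<Rightarrow> bool" where
  "eigenvalue_A u v l \<longleftrightarrow>
     (\<exists>x1 x2. (x1, x2) \<noteq> (0, 0) \<and> 0 * x1 + u * x2 = l * x1 \<and> 1 * x1 + v * x2 = l * x2)"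

definition root_of_unity :: "'a::field \<Rightarrow> bool" where
  "root_of_unity z \<longleftrightarrow> (\<exists>n::nat. n > 0 \<and> z ^ n = 1)"

end

theory Submission
  imports Defs
begin

text \<open>
  Since l1 and l2 are the roots of x^2 = u + v x, in the coordinates alpha = x + y,
  beta = l2 x + l1 y the automorphism sigma acts diagonally: sigma x = l2 x and
  sigma y = l1 y. Dehomogenising at x = 1, y = t sends a homogeneous p of degree d to
  P(t) = p(1 + t, l2 + l1 t), and sigma p to l2^d P(r t) with r = l1 / l2. As 1 + t and
  l2 + l1 t are independent linear forms (l1 \<noteq> l2), P is nonzero of degree at most d.
  Comparing leading coefficients in (sigma p) q = c p (sigma q) then gives
  c = l2^(deg p - deg q) r^(deg P - deg Q), which is the claim with i = deg P - deg Q.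
\<close>

lemma map_poly_add:
  assumes "f 0 = 0" "\<And>a b. f (a + b) = f a + f b"
  shows "map_poly f (p + q) = map_poly f p + map_poly f q"
  by (intro poly_eqI) (simp add: coeff_map_poly assms)

lemma map_poly_mult:
  fixes f :: "'a::comm_ring_1 \<Rightarrow> 'b::comm_ring_1"
  assumes "f 0 = 0" "\<And>a b. f (a + b) = f a + f b" "\<And>a b. f (a * b) = f a * f b"
  shows "map_poly f (p * q) = map_poly f p * map_poly f q"
proof (induction p)
  case (pCons a p)
  have "map_poly f (pCons a p * q) = map_poly f (smult a q + pCons 0 (p * q))"
    by (simp add: mult_pCons_left)
  also have "\<dots> = map_poly f (pCons a p) * map_poly f q"
    by (simp add: map_poly_add map_poly_smult map_poly_pCons mult_pCons_left assms pCons.IH)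
  finally show ?case .
qed simp

lemma poly_map_poly_hom:
  fixes h :: "'a::comm_ring_1 \<Rightarrow> 'b::comm_ring_1"
  assumes "h 0 = 0" "\<And>a b. h (a + b) = h a + h b" "\<And>a b. h (a * b) = h a * h b"
  shows "h (poly p x) = poly (map_poly h p) (h x)"
  by (induction p) (simp_all add: map_poly_pCons assms)

lemma pcompose_power_left: "pcompose (p ^ n) q = pcompose p q ^ n"
  by (induction n) (simp_all add: pcompose_mult pcompose_1)

lemma pcompose_monom: "pcompose (monom a n) q = smult a (q ^ n)"
  by (simp add: monom_altdef pcompose_smult pcompose_power_left pcompose_pCons)

lemma smult_sum_right: "smult a (sum f A) = (\<Sum>x\<in>A. smult a (f x))"
  by (induction A rule: infinite_finite_induct) (simp_all add: smult_add_right)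

definition poly2 :: "'a::comm_ring_1 poly poly \<Rightarrow> 'a poly \<Rightarrow> 'a poly \<Rightarrow> 'a poly" where
  "poly2 p X Y = poly (map_poly (\<lambda>c. pcompose c X) p) Y"

lemma poly2_0 [simp]: "poly2 0 X Y = 0"
  by (simp add: poly2_def)

lemma poly2_add: "poly2 (p + q) X Y = poly2 p X Y + poly2 q X Y"
  by (simp add: poly2_def map_poly_add pcompose_add)

lemma poly2_mult: "poly2 (p * q) X Y = poly2 p X Y * poly2 q X Y"
  by (simp add: poly2_def map_poly_mult pcompose_add pcompose_mult)

lemma poly2_bconst [simp]: "poly2 (bconst c) X Y = [:c:]"
  by (simp add: poly2_def bconst_def map_poly_pCons)

lemma poly2_alpha [simp]: "poly2 alpha X Y = X"
  by (simp add: poly2_def alpha_def map_poly_pCons pcompose_pCons)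

lemma poly2_beta [simp]: "poly2 beta X Y = Y"
  by (simp add: poly2_def beta_def map_poly_pCons pcompose_1)

lemma poly2_bsigma: "poly2 (bsigma u v p) X Y = poly2 p Y (smult u X + smult v Y)"
proof -
  have hom: "poly2 0 X Y = 0" "\<And>a b. poly2 (a + b) X Y = poly2 a X Y + poly2 b X Y"
    "\<And>a b. poly2 (a * b) X Y = poly2 a X Y * poly2 b X Y"
    by (simp_all add: poly2_add poly2_mult)
  have coeff_image: "poly2 (poly (map_poly bconst c) beta) X Y = pcompose c Y" for c
    by (simp add: poly_map_poly_hom[where h = "\<lambda>a. poly2 a X Y", OF hom] map_poly_map_poly
        o_def pcompose_altdef bconst_def poly2_bconst[unfolded bconst_def])
  show ?thesis
    unfolding bsigma_def poly_map_poly_hom[where h = "\<lambda>a. poly2 a X Y", OF hom]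
    by (simp add: map_poly_map_poly o_def coeff_image poly2_add poly2_mult)
       (simp add: poly2_def)
qed

lemma poly2_pcompose: "poly2 p (pcompose X R) (pcompose Y R) = pcompose (poly2 p X Y) R"
  unfolding poly2_def
  by (simp add: poly_map_poly_hom[where h = "\<lambda>c. pcompose c R"] pcompose_add pcompose_mult
      map_poly_map_poly o_def pcompose_assoc)

lemma homogeneous_coeff:
  assumes "homogeneous p"
  shows "coeff p j = (if j \<le> total_degree p
    then monom (coeff (coeff p j) (total_degree p - j)) (total_degree p - j) else 0)"
proof (intro poly_eqI)
  fix i
  have "coeff (coeff p j) i \<noteq> 0 \<Longrightarrow> i + j = total_degree p"
    using assms unfolding homogeneous_def by blast
  then show "coeff (coeff p j) i = coeff (if j \<le> total_degree p
    then monom (coeff (coeff p j) (total_degree p - j)) (total_degree p - j) else 0) i"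
    by (cases "i + j = total_degree p") (auto simp: coeff_monom)
qed

lemma poly2_homogeneous:
  assumes "homogeneous p"
  shows "poly2 p X Y = (\<Sum>j\<le>total_degree p.
    smult (coeff (coeff p j) (total_degree p - j)) (X ^ (total_degree p - j) * Y ^ j))"
proof -
  define d where "d = total_degree p"
  have "degree p \<le> d"
  proof (intro degree_le allI impI)
    fix j assume "d < j"
    then show "coeff p j = 0" using homogeneous_coeff[OF assms, of j] by (simp add: d_def)
  qed
  then have "degree (map_poly (\<lambda>c. pcompose c X) p) \<le> d"
    using map_poly_degree_leq order_trans by blast
  then have "poly2 p X Y = (\<Sum>j\<le>d. pcompose (coeff p j) X * Y ^ j)"
    unfolding poly2_def
    by (subst poly_as_sum_of_monoms'[symmetric]) (simp_all add: poly_sum poly_monom coeff_map_poly)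
  also have "\<dots> = (\<Sum>j\<le>d. smult (coeff (coeff p j) (d - j)) (X ^ (d - j) * Y ^ j))"
  proof (intro sum.cong refl)
    fix j assume "j \<in> {..d}"
    define a where "a = coeff (coeff p j) (d - j)"
    have "coeff p j = monom a (d - j)"
      using homogeneous_coeff[OF assms, of j] \<open>j \<in> {..d}\<close> by (simp add: a_def d_def)
    then show "pcompose (coeff p j) X * Y ^ j = smult a (X ^ (d - j) * Y ^ j)"
      by (simp add: pcompose_monom)
  qed
  finally show ?thesis by (simp add: d_def)
qed

lemma poly2_smult_homogeneous:
  assumes "homogeneous p"
  shows "poly2 p (smult k X) (smult k Y) = smult (k ^ total_degree p) (poly2 p X Y)"
  unfolding poly2_homogeneous[OF assms] smult_sum_right
proof (intro sum.cong refl)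
  fix j assume "j \<in> {..total_degree p}"
  then have "k ^ total_degree p = k ^ (total_degree p - j) * k ^ j"
    by (simp flip: power_add)
  then show "smult (coeff (coeff p j) (total_degree p - j))
      (smult k X ^ (total_degree p - j) * smult k Y ^ j) =
    smult (k ^ total_degree p) (smult (coeff (coeff p j) (total_degree p - j))
      (X ^ (total_degree p - j) * Y ^ j))"
    by (simp add: smult_power mult_ac)
qed

lemma degree_poly2_homogeneous_le:
  assumes "homogeneous p" "degree X \<le> 1" "degree Y \<le> 1"
  shows "degree (poly2 p X Y) \<le> total_degree p"
  unfolding poly2_homogeneous[OF assms(1)]
proof (intro degree_sum_le)
  fix j assume j: "j \<in> {..total_degree p}"
  have "degree (X ^ (total_degree p - j) * Y ^ j) \<le> degree X * (total_degree p - j) + degree Y * j"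
    by (meson add_mono degree_mult_le degree_power_le order_trans)
  also have "\<dots> \<le> 1 * (total_degree p - j) + 1 * j"
    using assms(2,3) by (intro add_mono mult_le_mono1)
  also have "\<dots> = total_degree p"
    using j by simp
  finally show "degree (smult (coeff (coeff p j) (total_degree p - j))
      (X ^ (total_degree p - j) * Y ^ j)) \<le> total_degree p"
    by (meson degree_smult_le order_trans)
qed simp

lemma binary_form_eq_0_imp_coeff_eq_0:
  fixes X Y :: "'a::idom poly"
  assumes "poly Y s = 0" "poly X s \<noteq> 0" "Y \<noteq> 0"
    and "(\<Sum>j\<le>d. smult (a j) (X ^ (d - j) * Y ^ j)) = 0" "j \<le> d"
  shows "a j = 0"
  using assms(4,5)
proof (induction d arbitrary: a j)
  case (Suc d)
  define S where "S = (\<Sum>i\<le>d. smult (a (Suc i)) (X ^ (d - i) * Y ^ i))"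
  have "(\<Sum>j\<le>Suc d. smult (a j) (X ^ (Suc d - j) * Y ^ j)) = smult (a 0) (X ^ Suc d) + Y * S"
    by (subst sum.atMost_Suc_shift) (simp add: S_def sum_distrib_left mult_ac)
  with Suc.prems(1) have decomposed: "smult (a 0) (X ^ Suc d) + Y * S = 0"
    by simp
  then have "poly (smult (a 0) (X ^ Suc d) + Y * S) s = 0"
    by simp
  with assms(1,2) have "a 0 = 0"
    by simp
  with decomposed assms(3) have "S = 0"
    by simp
  with Suc.IH[of "\<lambda>i. a (Suc i)"] have "a (Suc i) = 0" if "i \<le> d" for i
    using that by (simp add: S_def)
  with \<open>a 0 = 0\<close> Suc.prems(2) show ?case
    by (cases j) auto
qed simp

lemma poly2_homogeneous_nonzero:
  fixes X Y :: "'a::idom poly"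
  assumes "homogeneous p" "p \<noteq> 0" "poly Y s = 0" "poly X s \<noteq> 0" "Y \<noteq> 0"
  shows "poly2 p X Y \<noteq> 0"
proof
  assume "poly2 p X Y = 0"
  then have vanish: "coeff (coeff p j) (total_degree p - j) = 0" if "j \<le> total_degree p" for j
    using binary_form_eq_0_imp_coeff_eq_0[OF assms(3-5),
        of "\<lambda>j. coeff (coeff p j) (total_degree p - j)" "total_degree p"] that
    unfolding poly2_homogeneous[OF assms(1)] by blast
  obtain i j where "coeff (coeff p j) i \<noteq> 0"
    using assms(2) by (metis leading_coeff_0_iff)
  moreover from this have "i + j = total_degree p"
    using assms(1) unfolding homogeneous_def by blast
  ultimately show False
    using vanish[of j] by (metis add_diff_cancel_right' le_add2)
qed

lemma eigenvalue_A_char_eq: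
  assumes "eigenvalue_A u v l"
  shows "l\<^sup>2 = u + v * l"
proof -
  obtain x1 x2 where nonzero: "(x1, x2) \<noteq> (0, 0)"
    and row1: "u * x2 = l * x1" and row2: "x1 + v * x2 = l * x2"
    using assms unfolding eigenvalue_A_def by auto
  from row2 have x1: "x1 = (l - v) * x2"
    by (simp add: algebra_simps)
  with nonzero have "x2 \<noteq> 0"
    by auto
  moreover from row1 x1 have "(u + v * l) * x2 = l\<^sup>2 * x2"
    by (simp add: algebra_simps power2_eq_square)
  ultimately show ?thesis
    by simp
qed

lemma poly2_bsigma_eigenbasis:
  fixes u v l1 l2 :: "'a::field"
  assumes "l1\<^sup>2 = u + v * l1" "l2\<^sup>2 = u + v * l2" "l2 \<noteq> 0" "homogeneous p"
  shows "poly2 (bsigma u v p) [:1, 1:] [:l2, l1:] =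
    smult (l2 ^ total_degree p) (pcompose (poly2 p [:1, 1:] [:l2, l1:]) [:0, l1 / l2:])"
proof -
  have "[:l2, l1:] = smult l2 (pcompose [:1, 1:] [:0, l1 / l2:])"
    using assms(3) by (simp add: pcompose_pCons)
  moreover have "smult u [:1, 1:] + smult v [:l2, l1:] = smult l2 (pcompose [:l2, l1:] [:0, l1 / l2:])"
    using assms by (simp add: pcompose_pCons power2_eq_square field_simps)
  ultimately show ?thesis
    by (simp add: poly2_bsigma poly2_smult_homogeneous[OF assms(4)] poly2_pcompose)
qed

lemma lead_coeff_pcompose_linear:
  fixes r :: "'a::idom"
  assumes "r \<noteq> 0"
  shows "lead_coeff (pcompose p [:0, r:]) = lead_coeff p * r ^ degree p"
  using assms by (simp add: lead_coeff_comp)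

lemma homogeneous_semi_invariant_weights:
  fixes u v c l1 l2 :: "'a::field"
  assumes "l1\<^sup>2 = u + v * l1" "l2\<^sup>2 = u + v * l2" "l1 \<noteq> l2" "l1 \<noteq> 0" "l2 \<noteq> 0"
    and "homogeneous p" "homogeneous q" "p \<noteq> 0" "q \<noteq> 0"
    and "bsigma u v p * q = bconst c * p * bsigma u v q"
  obtains kp kq where "kp \<le> total_degree p" "kq \<le> total_degree q"
    "l2 ^ (total_degree p + kq) * l1 ^ kp = c * l2 ^ (total_degree q + kp) * l1 ^ kq"
proof -
  define A where "A = [:1, 1 :: 'a:]"
  define B where "B = [:l2, l1:]"
  define R where "R = [:0, l1 / l2:]"
  define P Q where "P = poly2 p A B" "Q = poly2 q A B"
  define dp dq where "dp = total_degree p" "dq = total_degree q"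
  have "poly B (- l2 / l1) = 0" "poly A (- l2 / l1) \<noteq> 0" "B \<noteq> 0"
    using assms(3,4) by (auto simp: A_def B_def field_simps)
  then have "P \<noteq> 0" "Q \<noteq> 0"
    using assms(6-9) by (simp_all add: P_Q_def poly2_homogeneous_nonzero)
  have "degree P \<le> dp" "degree Q \<le> dq"
    by (simp_all add: P_Q_def dp_dq_def A_def B_def degree_poly2_homogeneous_le assms(6,7))
  have "smult (l2 ^ dp) (pcompose P R) * Q = [:c:] * P * smult (l2 ^ dq) (pcompose Q R)"
    using arg_cong[OF assms(10), of "\<lambda>x. poly2 x A B"] assms(1,2,5-7)
    by (simp add: poly2_mult poly2_bsigma_eigenbasis A_def B_def R_def P_Q_def dp_dq_def)
  then have "lead_coeff (smult (l2 ^ dp) (pcompose P R) * Q) =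
      lead_coeff ([:c:] * P * smult (l2 ^ dq) (pcompose Q R))"
    by (rule arg_cong)
  then have "l2 ^ dp * (lead_coeff P * (l1 / l2) ^ degree P) * lead_coeff Q =
      c * lead_coeff P * (l2 ^ dq * (lead_coeff Q * (l1 / l2) ^ degree Q))"
    using assms(4,5)
    by (simp only: lead_coeff_mult lead_coeff_smult lead_coeff_pCons(2)[OF refl]
        lead_coeff_pcompose_linear R_def divide_eq_0_iff de_Morgan_disj simp_thms)
  then have "l2 ^ (dp + degree Q) * l1 ^ degree P = c * l2 ^ (dq + degree P) * l1 ^ degree Q"
    using \<open>P \<noteq> 0\<close> \<open>Q \<noteq> 0\<close> assms(5) by (simp add: power_divide power_add field_simps)
  then show thesis
    using that \<open>degree P \<le> dp\<close> \<open>degree Q \<le> dq\<close> by (simp add: dp_dq_def)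
qed

lemma power_int_eq_if_power_eq:
  fixes a b c :: "'a::field"
  assumes "a \<noteq> 0" "b \<noteq> 0" "b ^ (m + k) * a ^ n = c * b ^ (l + n) * a ^ k"
  shows "c = a powi (int n - int k) * b powi (int m - int l - (int n - int k))"
proof -
  have "int m - int l - (int n - int k) = int (m + k) - int (l + n)"
    by simp
  then have "a powi (int n - int k) * b powi (int m - int l - (int n - int k)) =
      a ^ n / a ^ k * (b ^ (m + k) / b ^ (l + n))"
    using assms(1,2) by (simp only: power_int_diff power_int_of_nat simp_thms)
  also have "\<dots> = c"
    using assms by (simp add: field_simps)
  finally show ?thesis ..
qed

lemma fsigma_semi_invariant_imp_eq:
  fixes p q :: "'a::field poly poly"
  assumes "p \<noteq> 0" "q \<noteq> 0" "c \<noteq> 0"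
    and "fsigma u v p q = Fract (bconst c) 1 * Fract p q"
  shows "bsigma u v p * q = bconst c * p * bsigma u v q"
proof -
  have "bconst c \<noteq> 0"
    using assms(3) by (simp add: bconst_def)
  with assms have "bsigma u v q \<noteq> 0"
    by (auto simp: fsigma_def eq_fract)
  with assms show ?thesis
    by (simp add: fsigma_def eq_fract(1))
qed

theorem theorem2p2:
  fixes u v c l1 l2 :: "'a::field"
    and p q :: "'a poly poly"
  assumes "u \<noteq> 0"
    and "eigenvalue_A u v l1" and "eigenvalue_A u v l2" and "l1 \<noteq> l2"
    and "\<not> root_of_unity (l1 / l2)"
    and "p \<noteq> 0" and "q \<noteq> 0" and "homogeneous p" and "homogeneous q"
    and "c \<noteq> 0"
    and "fsigma u v p q = Fract (bconst c) 1 * Fract p q"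
  shows "\<exists>i::int. - int (total_degree q) \<le> i \<and> i \<le> int (total_degree p) \<and>
           fsigma u v p q / Fract p q =
             Fract (bconst (l1 powi i * l2 powi (int (total_degree p) - int (total_degree q) - i))) 1"
proof -
  have char: "l1\<^sup>2 = u + v * l1" "l2\<^sup>2 = u + v * l2"
    using assms(2,3) by (simp_all add: eigenvalue_A_char_eq)
  with assms(1) have "l1 \<noteq> 0" "l2 \<noteq> 0"
    by auto
  obtain kp kq where "kp \<le> total_degree p" "kq \<le> total_degree q" and weights:
      "l2 ^ (total_degree p + kq) * l1 ^ kp = c * l2 ^ (total_degree q + kp) * l1 ^ kq"
    using homogeneous_semi_invariant_weights[OF char assms(4) \<open>l1 \<noteq> 0\<close> \<open>l2 \<noteq> 0\<close> assms(8,9,6,7)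
        fsigma_semi_invariant_imp_eq[OF assms(6,7,10,11)]] .
  have "Fract p q \<noteq> 0"
    using assms(6,7) by (simp add: Zero_fract_def eq_fract(1))
  then have "fsigma u v p q / Fract p q = Fract (bconst c) 1"
    unfolding assms(11) by (rule nonzero_mult_div_cancel_right)
  with \<open>kp \<le> total_degree p\<close> \<open>kq \<le> total_degree q\<close> show ?thesis
    by (intro exI[of _ "int kp - int kq"])
       (simp add: power_int_eq_if_power_eq[OF \<open>l1 \<noteq> 0\<close> \<open>l2 \<noteq> 0\<close> weights, symmetric])
qed

end
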